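(* Let $n\ge2$, let $\mathcal{C}_i^X$ denote the set of maximal flags of $\mathrm{PG}(n,q)$ of type $i$ with respect to the point $X$. Then for all $i,j\in[n+1]$ and points $X,Y$, $$|\mathcal{C}_i^X\cap\mathcal{C}_j^Y|=\begin{cases}\delta_{ij}\,c(n-1)\,q^{i-1}&\text{if }X=Y,\\ c(n-2)\,q^{i-2}(q^{j-1}-\delta_{ij})&\text{if }X\neq Y.\end{cases}$$
   Context: A maximal flag of $\mathrm{PG}(n,q)$ is $(U_1,\dots,U_n)$ with $U_1\subset\cdots\subset U_n$ subspaces of $\mathbb{F}_q^{n+1}$, $\dim U_i=i$. Its type with respect to a point $X$ is the smallest $k\in[n]$ with $X\subseteq U_k$, and $n+1$ otherwise. $v(k)=\frac{q^{k+1}-1}{q-1}$ is the number of points of $\mathrm{PG}(k,q)$ and $c(k)=\prod_{i=1}^k v(i)$ is the number of maximal flags of $\mathrm{PG}(k,q)$ (with $c(0)=1$). *)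

theory Defs
  imports "HOL-Analysis.Analysis"
begin

text \<open>The projective space PG(n,q) is modelled on the vector space 'a^'b over a
finite field 'a (q = CARD('a)) with CARD('b) = n+1. Subspaces and dimensions
are the library notions vec.subspace / vec.dim for scalar multiplication (*s).\<close>

definition pg_points :: "('a::{field,finite} ^ 'b) set set" where
  "pg_points = {X. vec.subspace X \<and> vec.dim X = 1}"

text \<open>Outside the index range [1,n] the function is
set to the empty set so that each flag has a unique representative.\<close>

definition max_flags :: "(nat \<Rightarrow> ('a::{field,finite} ^ 'b) set) set" where
  "max_flags = {U. (\<forall>i\<in>{1..CARD('b) - 1}. vec.subspace (U i) \<and> vec.dim (U i) = i)
                 \<and> (\<forall>i\<in>{1..<CARD('b) - 1}. U i \<subseteq> U (Suc i))
                 \<and> (\<forall>i. i \<notin> {1..CARD('b) - 1} \<longrightarrow> U i = {})}"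

definition flag_type :: "('a::{field,finite} ^ 'b) set \<Rightarrow> (nat \<Rightarrow> ('a ^ 'b) set) \<Rightarrow> nat" where
  "flag_type X U =
     (if \<exists>k\<in>{1..CARD('b) - 1}. X \<subseteq> U k
      then LEAST k. k \<in> {1..CARD('b) - 1} \<and> X \<subseteq> U k
      else CARD('b))"

definition flags_of_type :: "nat \<Rightarrow> ('a::{field,finite} ^ 'b) set \<Rightarrow> (nat \<Rightarrow> ('a ^ 'b) set) set" where
  "flags_of_type i X = {U \<in> max_flags. flag_type X U = i}"

definition pg_v :: "nat \<Rightarrow> nat \<Rightarrow> nat" where
  "pg_v q k = (q ^ (k + 1) - 1) div (q - 1)"

definition pg_c :: "nat \<Rightarrow> nat \<Rightarrow> nat" where
  "pg_c q k = (\<Prod>i=1..k. pg_v q i)"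

end

theory Submission
  imports Defs
begin

text \<open>
  A maximal flag of PG(n,q) is a chain {0} = U_0 < U_1 < ... < U_n of subspaces of F_q^(n+1) in
  which each member is an upper cover of the previous one, and a k-dimensional subspace has
  [n+1-k]_q = 1 + q + ... + q^(n-k) upper covers. Prescribing the type i of the flag with respect
  to a point <x> says, when U_(k+1) is chosen above U_k, whether x must lie in it: all
  [n+1-k]_q covers are admissible if k >= i, exactly one if k+1 = i, and the [n+1-k]_q - 1
  covers avoiding x if k+1 < i. These numbers depend only on k, so their product q^(i-1) c(n-1)
  counts the flags.
  For two points <x> \<noteq> <y> and types i < j, the members of dimension below i meet the line
  <x,y> trivially (otherwise U_i would contain y). Adding this redundant condition makes the
  number of admissible covers depend only on k again, which gives q^(i+j-3) c(n-2).
  Finally, partitioning the flags of type i with respect to <x> by their type with respect to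
  <y> leaves the part of type i as the only unknown.
\<close>

section \<open>q-integers and q-factorials\<close>

definition qint :: "nat \<Rightarrow> nat \<Rightarrow> nat" where
  "qint q m = (\<Sum>k<m. q ^ k)"

lemma qint_0 [simp]: "qint q 0 = 0"
  by (simp add: qint_def)

lemma qint_Suc [simp]: "qint q (Suc m) = 1 + q * qint q m"
  unfolding qint_def by (subst sum.lessThan_Suc_shift) (simp add: sum_distrib_left)

lemma pred_mult_qint: "(q - 1) * qint q m = q ^ m - 1"
proof (cases "q = 0")
  case False
  then have "int ((q - 1) * qint q m) = int q ^ m - 1"
    by (simp add: qint_def of_nat_diff power_diff_1_eq[symmetric])
  also have "\<dots> = int (q ^ m - 1)" using False by (simp add: of_nat_diff)
  finally show ?thesis by (simp only: of_nat_eq_iff)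
qed (simp add: qint_def power_0_left)

lemma of_nat_qint: "of_nat (qint q m) = (\<Sum>l=1..m. (of_nat q :: 'a::comm_semiring_1) ^ (l - 1))"
  by (simp add: qint_def sum.atLeast1_atMost_eq)

lemma qint_add_2_diff: "qint q (m + 2) - qint q 2 = q ^ 2 * qint q m"
  by (simp add: power2_eq_square algebra_simps numeral_2_eq_2)

fun qfact :: "nat \<Rightarrow> nat \<Rightarrow> nat" where
  "qfact q 0 = 1"
| "qfact q (Suc n) = qint q (Suc n) * qfact q n"

lemma prod_qint_descending: "(\<Prod>k<n. qint q (n + 1 - k)) = qfact q (Suc n)"
proof (induction n)
  case (Suc n)
  have "(\<Prod>k<Suc n. qint q (Suc n + 1 - k)) = qint q (Suc n + 1) * (\<Prod>k<n. qint q (n + 1 - k))"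
    using prod.lessThan_Suc_shift[of "\<lambda>k. qint q (Suc n + 1 - k)" n] by simp
  then show ?case using Suc by (simp del: qint_Suc)
qed simp

lemma pg_c_eq_qfact:
  assumes "q \<ge> 2"
  shows "pg_c q k = qfact q (Suc k)"
proof -
  have "pg_v q m = qint q (Suc m)" for m
  proof -
    have "pg_v q m = ((q - 1) * qint q (Suc m)) div (q - 1)"
      by (simp only: pg_v_def pred_mult_qint Suc_eq_plus1)
    also have "\<dots> = qint q (Suc m)" using assms by (intro nonzero_mult_div_cancel_left) simp
    finally show ?thesis .
  qed
  then show ?thesis
  proof (induction k)
    case (Suc k)
    have "pg_c q (Suc k) = pg_c q k * pg_v q (Suc k)" by (simp add: pg_c_def)
    then show ?case using Suc by (simp del: qint_Suc)
  qed (simp add: pg_c_def)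
qed

lemma power_eq_power_int_mult:
  fixes r :: "'a::field"
  assumes "r \<noteq> 0" "1 \<le> j" "3 \<le> i + j"
  shows "r ^ (i + j - 3) = r powi (int i - 2) * r ^ (j - 1)"
proof -
  have "int (i + j - 3) = (int i - 2) + int (j - 1)" using assms by simp
  then show ?thesis using power_int_add[of r "int i - 2" "int (j - 1)"] assms(1)
    by (metis power_int_of_nat)
qed

section \<open>Counting subspaces\<close>

lemma card_field_ge_2: "CARD('a::{field,finite}) \<ge> 2"
proof -
  have "card {0::'a, 1} \<le> CARD('a)" by (rule card_mono) auto
  then show ?thesis by simp
qed

lemma card_span_insert:
  fixes a :: "'a::{field,finite}^'b"
  assumes a: "a \<notin> vec.span S"
  shows "card (vec.span (insert a S)) = CARD('a) * card (vec.span S)"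
proof -
  let ?f = "\<lambda>(k, y). k *s a + y"
  have "inj_on ?f (UNIV \<times> vec.span S)"
  proof (rule inj_onI, clarsimp)
    fix k k' :: 'a and y y'
    assume y: "y \<in> vec.span S" "y' \<in> vec.span S" and eq: "k *s a + y = k' *s a + y'"
    have "(k - k') *s a = y' - y"
      using eq by (simp add: vector_sub_rdistrib algebra_simps eq_diff_eq)
    then have "(k - k') *s a \<in> vec.span S" using vec.span_diff[OF y(2) y(1)] by simp
    have "k = k'"
    proof (rule ccontr)
      assume "k \<noteq> k'"
      then have "inverse (k - k') *s ((k - k') *s a) = a" by (simp only: vector_smult_assoc) simp
      then show False using a vec.span_scale[OF \<open>(k - k') *s a \<in> vec.span S\<close>] by metis
    qed
    then show "k = k' \<and> y = y'" using eq by simp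
  qed
  moreover have "?f ` (UNIV \<times> vec.span S) = vec.span (insert a S)"
  proof (rule set_eqI, rule iffI)
    fix x assume "x \<in> ?f ` (UNIV \<times> vec.span S)"
    then obtain k y where "x = k *s a + y" "y \<in> vec.span S" by auto
    then show "x \<in> vec.span (insert a S)" by (auto simp: vec.span_breakdown_eq intro!: exI[of _ k])
  next
    fix x assume "x \<in> vec.span (insert a S)"
    then obtain k where "x - k *s a \<in> vec.span S" by (auto simp: vec.span_breakdown_eq)
    then show "x \<in> ?f ` (UNIV \<times> vec.span S)" by (intro image_eqI[of _ _ "(k, x - k *s a)"]) auto
  qed
  ultimately show ?thesis by (metis card_image card_cartesian_product)
qed

lemma card_span_independent:
  fixes B :: "('a::{field,finite}^'b) set"
  assumes "vec.independent B"
  shows "card (vec.span B) = CARD('a) ^ card B"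
  using vec.finiteI_independent[OF assms] assms
proof (induction B rule: finite_induct)
  case (insert b B)
  then show ?case by (simp add: vec.independent_insert card_span_insert)
qed simp

lemma card_subspace:
  fixes S :: "('a::{field,finite}^'b) set"
  assumes "vec.subspace S"
  shows "card S = CARD('a) ^ vec.dim S"
proof -
  obtain B where "B \<subseteq> S" "vec.independent B" "S \<subseteq> vec.span B" "card B = vec.dim S"
    using vec.basis_exists by blast
  with vec.span_minimal[OF _ assms] have "vec.span B = S" "vec.independent B" "card B = vec.dim S"
    by auto
  then show ?thesis using card_span_independent by metis
qed

definition upper_covers :: "('a::{field,finite}^'b) set \<Rightarrow> ('a^'b) set \<Rightarrow> ('a^'b) set set" where
  "upper_covers A S = {W. vec.subspace W \<and> A \<subseteq> W \<and> W \<subseteq> S \<and> vec.dim W = Suc (vec.dim A)}"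

lemma upper_cover_eq_span_insert:
  assumes A: "vec.subspace A" and W: "W \<in> upper_covers A S" and v: "v \<in> W" "v \<notin> A"
  shows "W = vec.span (insert v A)"
proof -
  have W': "vec.subspace W" "A \<subseteq> W" "vec.dim W = Suc (vec.dim A)"
    using W by (auto simp: upper_covers_def)
  have sub: "vec.span (insert v A) \<subseteq> W" using W' v by (intro vec.span_minimal) auto
  have "vec.dim (vec.span (insert v A)) = vec.dim W"
    using W' v A by (simp add: vec.dim_insert A[folded vec.span_eq_iff])
  then show ?thesis using vec.subspace_dim_equal[OF vec.subspace_span W'(1) sub] by simp
qed

lemma span_insert_mem_upper_covers:
  assumes A: "vec.subspace A" and S: "vec.subspace S" "A \<subseteq> S" and v: "v \<in> S" "v \<notin> A"
  shows "vec.span (insert v A) \<in> upper_covers A S"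
  using A S v vec.span_minimal[of "insert v A" S]
  by (auto simp: upper_covers_def vec.dim_insert A[folded vec.span_eq_iff] intro: vec.span_base)

lemma card_upper_covers:
  fixes A S :: "('a::{field,finite}^'b) set"
  assumes A: "vec.subspace A" and S: "vec.subspace S" "A \<subseteq> S"
  shows "card (upper_covers A S) = qint CARD('a) (vec.dim S - vec.dim A)"
proof -
  let ?q = "CARD('a)" and ?a = "vec.dim A" and ?C = "upper_covers A S"
  have partition: "S - A = (\<Union>W\<in>?C. W - A)"
  proof
    show "S - A \<subseteq> (\<Union>W\<in>?C. W - A)"
      using span_insert_mem_upper_covers[OF A S] by (blast intro: vec.span_base)
  qed (auto simp: upper_covers_def)
  have disjoint: "(W - A) \<inter> (W' - A) = {}" if "W \<in> ?C" "W' \<in> ?C" "W \<noteq> W'" for W W'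
    using that upper_cover_eq_span_insert[OF A] by blast
  have card_W: "card (W - A) = ?q ^ Suc ?a - ?q ^ ?a" if "W \<in> ?C" for W
    using that card_subspace[OF A] card_subspace[of W]
    by (subst card_Diff_subset) (auto simp: upper_covers_def)
  have "card (S - A) = (\<Sum>W\<in>?C. card (W - A))"
    unfolding partition by (rule card_UN_disjoint) (use disjoint in auto)
  also have "\<dots> = card ?C * (?q ^ Suc ?a - ?q ^ ?a)"
    using card_W by simp
  finally have "card (S - A) = card ?C * (?q ^ Suc ?a - ?q ^ ?a)" .
  moreover have "card (S - A) = ?q ^ vec.dim S - ?q ^ ?a"
    using S card_subspace[OF A] card_subspace[OF S(1)] by (simp add: card_Diff_subset)
  moreover have "?q ^ Suc ?a - ?q ^ ?a = ?q ^ ?a * (?q - 1)"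
    by (simp add: diff_mult_distrib2 mult.commute[of _ "?q ^ ?a"])
  moreover have "?q ^ vec.dim S - ?q ^ ?a = ?q ^ ?a * ((?q - 1) * qint ?q (vec.dim S - ?a))"
    unfolding pred_mult_qint using vec.dim_subset[OF S(2)]
    by (simp add: diff_mult_distrib2 flip: power_add)
  ultimately have "card ?C * (?q ^ ?a * (?q - 1)) = qint ?q (vec.dim S - ?a) * (?q ^ ?a * (?q - 1))"
    by (simp only: mult_ac)
  moreover have "?q ^ ?a * (?q - 1) > 0" using card_field_ge_2[where 'a = 'a] by simp
  ultimately show ?thesis by simp
qed

lemma card_upper_covers_UNIV:
  fixes A :: "('a::{field,finite}^'b) set"
  assumes "vec.subspace A"
  shows "card (upper_covers A UNIV) = qint CARD('a) (CARD('b) - vec.dim A)"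
  using card_upper_covers[OF assms vec.subspace_UNIV subset_UNIV] by (simp add: card_cart_basis)

lemma upper_covers_containing:
  assumes A: "vec.subspace A" and x: "x \<notin> A"
  shows "{W \<in> upper_covers A UNIV. x \<in> W} = {vec.span (insert x A)}"
  using upper_cover_eq_span_insert[OF A _ _ x]
    span_insert_mem_upper_covers[OF A vec.subspace_UNIV subset_UNIV _ x]
  by (auto intro: vec.span_base)

lemma card_upper_covers_avoiding:
  fixes A :: "('a::{field,finite}^'b) set"
  assumes A: "vec.subspace A" and x: "x \<notin> A"
  shows "card {W \<in> upper_covers A UNIV. x \<notin> W} = qint CARD('a) (CARD('b) - vec.dim A) - 1"
proof -
  have "{W \<in> upper_covers A UNIV. x \<notin> W} = upper_covers A UNIV - {vec.span (insert x A)}"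
    using upper_covers_containing[OF A x] by blast
  moreover have "vec.span (insert x A) \<in> upper_covers A UNIV"
    using upper_covers_containing[OF A x] by blast
  ultimately show ?thesis by (simp add: card_upper_covers_UNIV[OF A])
qed

lemma dim_span_Un_disjoint:
  assumes "vec.subspace A" "vec.subspace L" "A \<inter> L = {0}"
  shows "vec.dim (vec.span (A \<union> L)) = vec.dim A + vec.dim L"
  using vec.dim_sums_Int[OF assms(1,2)] assms
  by (simp add: vec.span_Un assms(1,2)[folded vec.span_eq_iff])

lemma upper_cover_Int_eq_zero_iff:
  assumes A: "vec.subspace A" and L: "vec.subspace L" and AL: "A \<inter> L = {0}"
    and W: "W \<in> upper_covers A UNIV"
  shows "W \<inter> L = {0} \<longleftrightarrow> \<not> W \<subseteq> vec.span (A \<union> L)"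
proof
  assume WL: "W \<inter> L = {0}"
  have W': "vec.subspace W" "A \<subseteq> W" "vec.dim W = Suc (vec.dim A)"
    using W by (auto simp: upper_covers_def)
  have "W \<noteq> A" using W'(3) by auto
  then obtain v where v: "v \<in> W" "v \<notin> A" using W'(2) by blast
  show "\<not> W \<subseteq> vec.span (A \<union> L)"
  proof
    assume "W \<subseteq> vec.span (A \<union> L)"
    with v(1) obtain a l where al: "v = a + l" "a \<in> A" "l \<in> L"
      unfolding vec.span_Un A[folded vec.span_eq_iff] L[folded vec.span_eq_iff] by blast
    then have "l = v - a" by simp
    then have "l \<in> W" using vec.subspace_diff[OF W'(1) v(1)] W'(2) al(2) by blast
    then have "l = 0" using WL al(3) by blast
    then show False using al v by simp
  qed
next
  assume notin: "\<not> W \<subseteq> vec.span (A \<union> L)"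
  have "l = 0" if l: "l \<in> W" "l \<in> L" for l
  proof (rule ccontr)
    assume "l \<noteq> 0"
    then have "l \<notin> A" using l AL by auto
    then have "W = vec.span (insert l A)" by (rule upper_cover_eq_span_insert[OF A W l(1)])
    also have "\<dots> \<subseteq> vec.span (A \<union> L)" using l by (intro vec.span_mono) auto
    finally show False using notin by blast
  qed
  moreover have "0 \<in> W" "0 \<in> L" using W L by (auto simp: upper_covers_def vec.subspace_0)
  ultimately show "W \<inter> L = {0}" by blast
qed

lemma card_upper_covers_meeting_trivially:
  fixes A L :: "('a::{field,finite}^'b) set"
  assumes A: "vec.subspace A" and L: "vec.subspace L" and AL: "A \<inter> L = {0}"
  shows "card {W \<in> upper_covers A UNIV. W \<inter> L = {0}}
    = qint CARD('a) (CARD('b) - vec.dim A) - qint CARD('a) (vec.dim L)"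
proof -
  let ?S = "vec.span (A \<union> L)"
  have "upper_covers A ?S = {W \<in> upper_covers A UNIV. W \<subseteq> ?S}"
    by (auto simp: upper_covers_def)
  then have "{W \<in> upper_covers A UNIV. W \<inter> L = {0}} = upper_covers A UNIV - upper_covers A ?S"
    using upper_cover_Int_eq_zero_iff[OF A L AL] by auto
  moreover have "upper_covers A ?S \<subseteq> upper_covers A UNIV" by (auto simp: upper_covers_def)
  moreover have "card (upper_covers A ?S) = qint CARD('a) (vec.dim L)"
    using card_upper_covers[OF A vec.subspace_span, of "A \<union> L"] dim_span_Un_disjoint[OF A L AL]
      vec.span_superset[of "A \<union> L"]
    by auto
  ultimately show ?thesis by (simp add: card_Diff_subset card_upper_covers_UNIV[OF A])
qed

lemma dim_span_pair:
  assumes "x \<noteq> 0" "y \<notin> vec.span {x}"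
  shows "vec.dim (vec.span {x, y}) = 2"
  using assms by (simp add: insert_commute[of x y] vec.dim_insert)

lemma card_upper_covers_separating:
  fixes A :: "('a::{field,finite}^'b) set"
  assumes A: "vec.subspace A" and x: "x \<noteq> 0" and y: "y \<notin> vec.span {x}"
    and AL: "A \<inter> vec.span {x, y} = {0}"
  shows "card {W \<in> upper_covers A UNIV. x \<in> W \<and> y \<notin> W} = 1"
proof -
  have xL: "x \<in> vec.span {x, y}" and yL: "y \<in> vec.span {x, y}" by (simp_all add: vec.span_base)
  have xA: "x \<notin> A" using x xL AL by blast
  have "y \<notin> vec.span (insert x A)"
  proof
    assume "y \<in> vec.span (insert x A)"
    then obtain k where "y - k *s x \<in> A"
      unfolding vec.span_breakdown_eq A[folded vec.span_eq_iff] by blast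
    moreover have "y - k *s x \<in> vec.span {x, y}" using xL yL by (intro vec.span_diff vec.span_scale)
    ultimately have "y - k *s x = 0" using AL by blast
    then have "y = k *s x" by simp
    then have "y \<in> vec.span {x}" using vec.span_scale[OF vec.span_base[of x "{x}"], of k] by simp
    then show False using y by contradiction
  qed
  have "{W \<in> upper_covers A UNIV. x \<in> W \<and> y \<notin> W}
      = {W \<in> {W \<in> upper_covers A UNIV. x \<in> W}. y \<notin> W}" by blast
  also have "\<dots> = {vec.span (insert x A)}"
    unfolding upper_covers_containing[OF A xA] using \<open>y \<notin> vec.span (insert x A)\<close> by blast
  finally show ?thesis by simp
qed

lemma Int_span_pair_eq_zero:
  assumes V: "vec.subspace V" "V \<subseteq> W" and W: "vec.subspace W"
    and x: "x \<in> W" "x \<notin> V" and y: "y \<notin> W"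
  shows "V \<inter> vec.span {x, y} = {0}"
proof -
  have "l = 0" if l: "l \<in> V" "l \<in> vec.span {x, y}" for l
  proof (rule ccontr)
    assume "l \<noteq> 0"
    show False
    proof (cases "l \<in> vec.span {x}")
      case True
      then have "x \<in> vec.span {l}" using \<open>l \<noteq> 0\<close> vec.in_span_insert[of l x "{}"] by simp
      then show False using x V l vec.span_minimal[of "{l}" V] by auto
    next
      case False
      then have "y \<in> vec.span {l, x}"
        using l vec.in_span_insert[of l y "{x}"] by (simp add: insert_commute)
      then show False using x y V W l vec.span_minimal[of "{l, x}" W] by auto
    qed
  qed
  then show ?thesis using V vec.subspace_0 vec.span_zero by blast
qed

section \<open>Maximal flags as chains of upper covers\<close>

text \<open>Chains are padded with {} beyond their length, like max_flags, so that a maximal flag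
  becomes a chain of length n by redefining its value at 0.\<close>

definition chains ::
    "(nat \<Rightarrow> ('a::{field,finite}^'b) set \<Rightarrow> bool) \<Rightarrow> nat \<Rightarrow> (nat \<Rightarrow> ('a^'b) set) set"
  where
  "chains P k = {U. U 0 = {0}
     \<and> (\<forall>t<k. U (Suc t) \<in> upper_covers (U t) UNIV \<and> P (Suc t) (U (Suc t)))
     \<and> (\<forall>t>k. U t = {})}"

lemma chains_0: "chains P 0 = {(\<lambda>_. {})(0 := {0})}"
  by (auto simp: chains_def fun_eq_iff)

lemma chains_Suc:
  "chains P (Suc k) =
    (\<lambda>(U, W). U(Suc k := W)) ` (SIGMA U:chains P k. {W \<in> upper_covers (U k) UNIV. P (Suc k) W})"
proof (intro set_eqI iffI)
  fix V assume V: "V \<in> chains P (Suc k)"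
  then have "V(Suc k := {}) \<in> chains P k"
    by (auto simp: chains_def)
  moreover have "V (Suc k) \<in> upper_covers (V k) UNIV" "P (Suc k) (V (Suc k))"
    using V by (auto simp: chains_def)
  ultimately show "V \<in> (\<lambda>(U, W). U(Suc k := W)) `
      (SIGMA U:chains P k. {W \<in> upper_covers (U k) UNIV. P (Suc k) W})"
    by (intro image_eqI[of _ _ "(V(Suc k := {}), V (Suc k))"]) auto
next
  fix V assume "V \<in> (\<lambda>(U, W). U(Suc k := W)) `
      (SIGMA U:chains P k. {W \<in> upper_covers (U k) UNIV. P (Suc k) W})"
  then show "V \<in> chains P (Suc k)"
    by (auto simp: chains_def less_Suc_eq)
qed

lemma chains_bottom: "U \<in> chains P k \<Longrightarrow> U 0 = {0}"
  by (simp add: chains_def)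

lemma chains_top: "U \<in> chains P (Suc k) \<Longrightarrow> P (Suc k) (U (Suc k))"
  by (simp add: chains_def)

lemma chains_subspace_dim:
  assumes "U \<in> chains P k" "t \<le> k"
  shows "vec.subspace (U t) \<and> vec.dim (U t) = t"
  using assms(2)
proof (induction t)
  case 0
  then show ?case using assms(1) by (simp add: chains_def)
next
  case (Suc t)
  then have "U (Suc t) \<in> upper_covers (U t) UNIV" using assms(1) by (simp add: chains_def)
  then show ?case using Suc by (simp add: upper_covers_def)
qed

lemma finite_chains: "finite (chains P k)"
  by (induction k) (simp_all add: chains_0 chains_Suc)

lemma card_chains:
  assumes "\<And>k U. k < K \<Longrightarrow> U \<in> chains P k \<Longrightarrow> card {W \<in> upper_covers (U k) UNIV. P (Suc k) W} = m k"
  shows "card (chains P K) = (\<Prod>k<K. m k)"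
  using assms
proof (induction K)
  case 0
  then show ?case by (simp add: chains_0)
next
  case (Suc K)
  let ?\<Sigma> = "SIGMA U:chains P K. {W \<in> upper_covers (U K) UNIV. P (Suc K) W}"
  have "inj_on (\<lambda>(U, W). U(Suc K := W)) ?\<Sigma>"
  proof (rule inj_onI, clarsimp)
    fix U U' W W'
    assume "U \<in> chains P K" "U' \<in> chains P K" and eq: "U(Suc K := W) = U'(Suc K := W')"
    then have "U (Suc K) = U' (Suc K)" by (simp add: chains_def)
    then show "U = U' \<and> W = W'" using eq by (metis fun_upd_triv fun_upd_upd fun_upd_eqD)
  qed
  then have "card (chains P (Suc K)) = card ?\<Sigma>"
    by (simp add: chains_Suc card_image)
  also have "\<dots> = (\<Sum>U\<in>chains P K. card {W \<in> upper_covers (U K) UNIV. P (Suc K) W})"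
    by (simp add: card_SigmaI finite_chains)
  also have "\<dots> = card (chains P K) * m K" using Suc.prems by simp
  finally show ?case using Suc by simp
qed

lemma max_flags_subspace_dim:
  "U \<in> max_flags \<Longrightarrow> i \<in> {1..CARD('b) - 1} \<Longrightarrow> vec.subspace (U i) \<and> vec.dim (U i) = i"
  for U :: "nat \<Rightarrow> ('a::{field,finite}^'b) set"
  by (simp add: max_flags_def)

lemma max_flags_outside: "U \<in> max_flags \<Longrightarrow> i \<notin> {1..CARD('b) - 1} \<Longrightarrow> U i = {}"
  for U :: "nat \<Rightarrow> ('a::{field,finite}^'b) set"
  by (simp add: max_flags_def)

lemma flag_mono:
  fixes U :: "nat \<Rightarrow> ('a::{field,finite}^'b) set"
  assumes U: "U \<in> max_flags" and "1 \<le> a" "a \<le> b" "b \<le> CARD('b) - 1"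
  shows "U a \<subseteq> U b"
  using assms(3,4)
proof (induction b rule: dec_induct)
  case (step m)
  then show ?case using U \<open>1 \<le> a\<close> by (force simp: max_flags_def)
qed simp

lemma max_flag_upd_0_mem_chains:
  fixes U :: "nat \<Rightarrow> ('a::{field,finite}^'b) set"
  assumes U: "U \<in> max_flags" and P: "\<forall>d\<in>{1..CARD('b) - 1}. P d (U d)"
  shows "U(0 := {0}) \<in> chains P (CARD('b) - 1)"
proof -
  let ?n = "CARD('b) - 1" and ?V = "U(0 := {0})"
  have "?V (Suc t) \<in> upper_covers (?V t) UNIV \<and> P (Suc t) (?V (Suc t))" if t: "t < ?n" for t
  proof (cases "t = 0")
    case True
    then show ?thesis using max_flags_subspace_dim[OF U, of 1] P t
      by (simp add: upper_covers_def vec.subspace_0)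
  next
    case False
    then show ?thesis
      using max_flags_subspace_dim[OF U, of t] max_flags_subspace_dim[OF U, of "Suc t"]
        flag_mono[OF U, of t "Suc t"] P t
      by (simp add: upper_covers_def)
  qed
  moreover have "?V t = {}" if "t > ?n" for t using max_flags_outside[OF U, of t] that by simp
  ultimately show ?thesis by (simp add: chains_def)
qed

lemma chain_upd_0_mem_max_flags:
  fixes V :: "nat \<Rightarrow> ('a::{field,finite}^'b) set"
  assumes V: "V \<in> chains P (CARD('b) - 1)"
  shows "V(0 := {}) \<in> max_flags" and "\<forall>d\<in>{1..CARD('b) - 1}. P d (V d)"
proof -
  let ?n = "CARD('b) - 1" and ?U = "V(0 := {})"
  have step: "V (Suc d) \<in> upper_covers (V d) UNIV" "P (Suc d) (V (Suc d))" if "d < ?n" for d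
    using V that by (simp_all add: chains_def)
  show "?U \<in> max_flags" unfolding max_flags_def
  proof (intro CollectI conjI ballI allI impI)
    fix i assume "i \<in> {1..?n}"
    then show "vec.subspace (?U i)" "vec.dim (?U i) = i"
      using chains_subspace_dim[OF V, of i] by auto
  next
    fix i assume "i \<in> {1..<?n}"
    then show "?U i \<subseteq> ?U (Suc i)" using step(1)[of i] by (simp add: upper_covers_def)
  next
    fix i assume "i \<notin> {1..?n}"
    then show "?U i = {}" using V by (cases "i = 0") (simp_all add: chains_def)
  qed
  show "\<forall>d\<in>{1..?n}. P d (V d)"
  proof
    fix d assume "d \<in> {1..?n}"
    then have "d - 1 < ?n" "Suc (d - 1) = d" by auto
    then show "P d (V d)" using step(2)[of "d - 1"] by simp
  qed
qed

lemma bij_betw_max_flags_chains: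
  "bij_betw (\<lambda>U. U(0 := {0}))
     {U \<in> max_flags. \<forall>d\<in>{1..CARD('b) - 1}. P d (U d)}
     (chains P (CARD('b) - 1) :: (nat \<Rightarrow> ('a::{field,finite}^'b) set) set)"
proof (rule bij_betw_byWitness[where f' = "\<lambda>U. U(0 := {})"])
  show "\<forall>U\<in>{U \<in> max_flags. \<forall>d\<in>{1..CARD('b) - 1}. P d (U d)}. (U(0 := {0}))(0 := {}) = U"
    using max_flags_outside[of _ 0] by (auto intro: fun_upd_idem)
  show "\<forall>V\<in>chains P (CARD('b) - 1). (V(0 := {}))(0 := {0}) = V"
    by (simp add: chains_def fun_upd_idem_iff)
  show "(\<lambda>U. U(0 := {0})) ` {U \<in> max_flags. \<forall>d\<in>{1..CARD('b) - 1}. P d (U d)}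
      \<subseteq> chains P (CARD('b) - 1)"
    using max_flag_upd_0_mem_chains by blast
  show "(\<lambda>U. U(0 := {})) ` chains P (CARD('b) - 1)
      \<subseteq> {U \<in> max_flags. \<forall>d\<in>{1..CARD('b) - 1}. P d (U d)}"
    using chain_upd_0_mem_max_flags by fastforce
qed

lemma finite_max_flags: "finite (max_flags :: (nat \<Rightarrow> ('a::{field,finite}^'b) set) set)"
  using bij_betw_finite[OF bij_betw_max_flags_chains[where P = "\<lambda>_ _. True"]]
  by (simp add: finite_chains)

section \<open>Types of flags\<close>

lemma flag_type_threshold:
  fixes U :: "nat \<Rightarrow> ('a::{field,finite}^'b) set"
  assumes U: "U \<in> max_flags"
  shows "flag_type X U \<in> {1..CARD('b)}"
    and "\<forall>k\<in>{1..CARD('b) - 1}. X \<subseteq> U k \<longleftrightarrow> flag_type X U \<le> k"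
proof -
  let ?n = "CARD('b) - 1"
  have "flag_type X U \<in> {1..CARD('b)} \<and> (\<forall>k\<in>{1..?n}. X \<subseteq> U k \<longleftrightarrow> flag_type X U \<le> k)"
  proof (cases "\<exists>k\<in>{1..?n}. X \<subseteq> U k")
    case True
    let ?m = "LEAST k. k \<in> {1..?n} \<and> X \<subseteq> U k"
    from True obtain k0 where "k0 \<in> {1..?n} \<and> X \<subseteq> U k0" by blast
    then have m: "?m \<in> {1..?n} \<and> X \<subseteq> U ?m" by (rule LeastI)
    have "X \<subseteq> U k \<longleftrightarrow> ?m \<le> k" if "k \<in> {1..?n}" for k
      using that m flag_mono[OF U, of ?m k] Least_le[of "\<lambda>k. k \<in> {1..?n} \<and> X \<subseteq> U k" k] by auto
    moreover have "?m \<le> CARD('b)" using m by auto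
    ultimately show ?thesis using True m by (simp add: flag_type_def)
  next
    case False
    then show ?thesis by (auto simp: flag_type_def)
  qed
  then show "flag_type X U \<in> {1..CARD('b)}" "\<forall>k\<in>{1..?n}. X \<subseteq> U k \<longleftrightarrow> flag_type X U \<le> k"
    by blast+
qed

lemma threshold_unique:
  fixes i j n :: nat
  assumes "i \<in> {1..Suc n}" "j \<in> {1..Suc n}" "\<forall>k\<in>{1..n}. i \<le> k \<longleftrightarrow> j \<le> k"
  shows "i = j"
proof (rule ccontr)
  assume "i \<noteq> j"
  then have "min i j \<in> {1..n}" "(i \<le> min i j) \<noteq> (j \<le> min i j)" using assms(1,2) by auto
  then show False using assms(3) by blast
qed

lemma flag_type_eq_iff:
  fixes U :: "nat \<Rightarrow> ('a::{field,finite}^'b) set"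
  assumes U: "U \<in> max_flags" and i: "i \<in> {1..CARD('b)}"
  shows "flag_type X U = i \<longleftrightarrow> (\<forall>k\<in>{1..CARD('b) - 1}. X \<subseteq> U k \<longleftrightarrow> i \<le> k)"
  using flag_type_threshold[OF U, of X] threshold_unique[of "flag_type X U" "CARD('b) - 1" i] i
  by auto

lemma flags_of_type_disjoint: "i \<noteq> j \<Longrightarrow> flags_of_type i X \<inter> flags_of_type j X = {}"
  by (auto simp: flags_of_type_def)

lemma card_eq_sum_card_flags_of_type:
  fixes A :: "(nat \<Rightarrow> ('a::{field,finite}^'b) set) set"
  assumes "A \<subseteq> max_flags"
  shows "card A = (\<Sum>l\<in>{1..CARD('b)}. card (A \<inter> flags_of_type l Y))"
proof -
  have "flag_type Y U \<in> {1..CARD('b)}" if "U \<in> A" for U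
    using that assms by (intro flag_type_threshold(1)) auto
  then have "A = (\<Union>l\<in>{1..CARD('b)}. A \<inter> flags_of_type l Y)"
    using assms by (auto simp: flags_of_type_def)
  moreover have "card (\<Union>l\<in>{1..CARD('b)}. A \<inter> flags_of_type l Y)
      = (\<Sum>l\<in>{1..CARD('b)}. card (A \<inter> flags_of_type l Y))"
  proof (rule card_UN_disjoint)
    show "\<forall>l\<in>{1..CARD('b)}. finite (A \<inter> flags_of_type l Y)"
      using assms finite_max_flags finite_subset by blast
  qed (auto simp: flags_of_type_def)
  ultimately show ?thesis by simp
qed

lemma flags_of_type_span_singleton:
  fixes x :: "'a::{field,finite}^'b"
  assumes "i \<in> {1..CARD('b)}"
  shows "flags_of_type i (vec.span {x}) =
    {U \<in> max_flags. \<forall>k\<in>{1..CARD('b) - 1}. x \<in> U k \<longleftrightarrow> i \<le> k}"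
proof -
  have point_sub: "vec.span {x} \<subseteq> U k \<longleftrightarrow> x \<in> U k"
    if "U \<in> max_flags" "k \<in> {1..CARD('b) - 1}" for U k
    using max_flags_subspace_dim[OF that] vec.span_minimal[of "{x}" "U k"] vec.span_base[of x "{x}"]
    by auto
  have "flag_type (vec.span {x}) U = i \<longleftrightarrow> (\<forall>k\<in>{1..CARD('b) - 1}. x \<in> U k \<longleftrightarrow> i \<le> k)"
    if U: "U \<in> max_flags" for U
    unfolding flag_type_eq_iff[OF U assms] by (intro ball_cong refl) (simp add: point_sub[OF U])
  then show ?thesis by (auto simp: flags_of_type_def)
qed

lemma flags_of_type_Int_span_singletons:
  fixes x y :: "'a::{field,finite}^'b"
  assumes ij: "1 \<le> i" "i < j" "j \<le> CARD('b)"
  shows "flags_of_type i (vec.span {x}) \<inter> flags_of_type j (vec.span {y}) =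
    {U \<in> max_flags. \<forall>d\<in>{1..CARD('b) - 1}. (x \<in> U d \<longleftrightarrow> i \<le> d) \<and> (y \<in> U d \<longleftrightarrow> j \<le> d)
       \<and> (d < i \<longrightarrow> U d \<inter> vec.span {x, y} = {0})}"
proof -
  let ?n = "CARD('b) - 1"
  have "U d \<inter> vec.span {x, y} = {0}"
    if U: "U \<in> max_flags" and H: "\<forall>d\<in>{1..?n}. (x \<in> U d \<longleftrightarrow> i \<le> d) \<and> (y \<in> U d \<longleftrightarrow> j \<le> d)"
      and d: "d \<in> {1..?n}" "d < i" for U d
  proof (rule Int_span_pair_eq_zero)
    show "vec.subspace (U d)" "vec.subspace (U i)"
      using max_flags_subspace_dim[OF U] d ij by auto
    show "U d \<subseteq> U i" using flag_mono[OF U] d ij by auto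
    show "x \<in> U i" "x \<notin> U d" "y \<notin> U i" using H d ij by auto
  qed
  moreover have "i \<in> {1..CARD('b)}" "j \<in> {1..CARD('b)}" using ij by auto
  ultimately show ?thesis
    by (simp only: flags_of_type_span_singleton) blast
qed

section \<open>Counting flags of prescribed types\<close>

definition one_point_step :: "nat \<Rightarrow> nat \<Rightarrow> nat \<Rightarrow> nat \<Rightarrow> nat" where
  "one_point_step q n i k =
    (if i \<le> k then qint q (n + 1 - k) else if i = Suc k then 1 else q * qint q (n - k))"

lemma prod_one_point_step:
  "i \<in> {1..n + 1} \<Longrightarrow> (\<Prod>k<n. one_point_step q n i k) = q ^ (i - 1) * qfact q n"
proof (induction n arbitrary: i)
  case (Suc n)
  have shift: "(\<Prod>k<Suc n. one_point_step q (Suc n) i k)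
      = one_point_step q (Suc n) i 0 * (\<Prod>k<n. one_point_step q (Suc n) i (Suc k))"
    by (rule prod.lessThan_Suc_shift)
  show ?case
  proof (cases "i = 1")
    case True
    then have "(\<Prod>k<n. one_point_step q (Suc n) i (Suc k)) = (\<Prod>k<n. qint q (n + 1 - k))"
      by (intro prod.cong) (auto simp: one_point_step_def)
    then show ?thesis
      using shift True prod_qint_descending[of q n] by (simp add: one_point_step_def)
  next
    case False
    then have "(\<Prod>k<n. one_point_step q (Suc n) i (Suc k)) = (\<Prod>k<n. one_point_step q n (i - 1) k)"
      by (intro prod.cong) (auto simp: one_point_step_def)
    also have "\<dots> = q ^ (i - 2) * qfact q n"
    proof -
      have "i - 1 \<in> {1..n + 1}" using Suc.prems False by auto
      from Suc.IH[OF this] show ?thesis by (simp add: numeral_2_eq_2)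
    qed
    finally have "(\<Prod>k<Suc n. one_point_step q (Suc n) i k)
        = q * qint q (Suc n) * (q ^ (i - 2) * qfact q n)"
      using shift False Suc.prems by (simp add: one_point_step_def del: qint_Suc)
    moreover have "q ^ (i - 1) = q * q ^ (i - 2)"
    proof -
      have "i - 1 = Suc (i - 2)" using False Suc.prems by auto
      then show ?thesis by simp
    qed
    ultimately show ?thesis by (simp add: mult_ac del: qint_Suc)
  qed
qed simp

lemma card_upper_covers_one_point_step:
  fixes A :: "('a::{field,finite}^'b) set"
  assumes A: "vec.subspace A" "vec.dim A = k" and k: "k < CARD('b)" and xA: "x \<in> A \<longleftrightarrow> i \<le> k"
  shows "card {W \<in> upper_covers A UNIV. x \<in> W \<longleftrightarrow> i \<le> Suc k}
    = one_point_step CARD('a) (CARD('b) - 1) i k"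
proof -
  consider "i \<le> k" | "i = Suc k" | "Suc k < i" by linarith
  then show ?thesis
  proof cases
    case 1
    then have "{W \<in> upper_covers A UNIV. x \<in> W \<longleftrightarrow> i \<le> Suc k} = upper_covers A UNIV"
      using xA by (auto simp: upper_covers_def)
    then show ?thesis using 1 card_upper_covers_UNIV[OF A(1)] A(2) k
      by (simp add: one_point_step_def Suc_diff_Suc)
  next
    case 2
    then show ?thesis using upper_covers_containing[OF A(1)] xA by (simp add: one_point_step_def)
  next
    case 3
    then have "{W \<in> upper_covers A UNIV. x \<in> W \<longleftrightarrow> i \<le> Suc k} = {W \<in> upper_covers A UNIV. x \<notin> W}"
      by auto
    moreover have "CARD('b) - k = Suc (CARD('b) - 1 - k)" using k by simp
    ultimately show ?thesis using 3 xA card_upper_covers_avoiding[OF A(1)] A(2)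
      by (simp add: one_point_step_def)
  qed
qed

lemma card_flags_of_type_span_singleton:
  fixes x :: "'a::{field,finite}^'b"
  assumes x: "x \<noteq> 0" and i: "i \<in> {1..CARD('b)}"
  shows "card (flags_of_type i (vec.span {x}) :: (nat \<Rightarrow> ('a^'b) set) set)
    = CARD('a) ^ (i - 1) * qfact CARD('a) (CARD('b) - 1)"
proof -
  let ?n = "CARD('b) - 1"
  let ?P = "\<lambda>d W. x \<in> W \<longleftrightarrow> i \<le> d"
  have "card (flags_of_type i (vec.span {x}) :: (nat \<Rightarrow> ('a^'b) set) set) = card (chains ?P ?n)"
    unfolding flags_of_type_span_singleton[OF i]
    by (rule bij_betw_same_card[OF bij_betw_max_flags_chains])
  also have "\<dots> = (\<Prod>k<?n. one_point_step CARD('a) ?n i k)"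
  proof (rule card_chains)
    fix k U assume k: "k < ?n" and U: "U \<in> chains ?P k"
    have "x \<in> U k \<longleftrightarrow> i \<le> k"
      using i x chains_bottom[OF U] chains_top[of U ?P "k - 1"] U by (cases k) auto
    then show "card {W \<in> upper_covers (U k) UNIV. ?P (Suc k) W} = one_point_step CARD('a) ?n i k"
      using card_upper_covers_one_point_step[of "U k" k x i] chains_subspace_dim[OF U, of k] k
      by simp
  qed
  also have "\<dots> = CARD('a) ^ (i - 1) * qfact CARD('a) ?n"
    using i by (intro prod_one_point_step) auto
  finally show ?thesis .
qed

definition two_point_step :: "nat \<Rightarrow> nat \<Rightarrow> nat \<Rightarrow> nat \<Rightarrow> nat \<Rightarrow> nat" where
  "two_point_step q n i j k =
    (if Suc k < i then q ^ 2 * qint q (n - 1 - k) else if Suc k = i then 1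
     else if Suc k < j then q * qint q (n - k) else if Suc k = j then 1 else qint q (n + 1 - k))"

lemma prod_two_point_step:
  "1 \<le> i \<Longrightarrow> i < j \<Longrightarrow> j \<le> n + 1 \<Longrightarrow>
    (\<Prod>k<n. two_point_step q n i j k) = q ^ (i + j - 3) * qfact q (n - 1)"
proof (induction n arbitrary: i j)
  case (Suc n)
  have shift: "(\<Prod>k<Suc n. two_point_step q (Suc n) i j k)
      = two_point_step q (Suc n) i j 0 * (\<Prod>k<n. two_point_step q (Suc n) i j (Suc k))"
    by (rule prod.lessThan_Suc_shift)
  show ?case
  proof (cases "i = 1")
    case True
    have "(\<Prod>k<n. two_point_step q (Suc n) i j (Suc k)) = (\<Prod>k<n. one_point_step q n (j - 1) k)"
      using True Suc.prems by (intro prod.cong) (auto simp: one_point_step_def two_point_step_def)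
    also have "\<dots> = q ^ (j - 2) * qfact q n"
    proof -
      have "j - 1 \<in> {1..n + 1}" using Suc.prems by auto
      from prod_one_point_step[OF this] show ?thesis by (simp add: numeral_2_eq_2)
    qed
    finally show ?thesis using shift True by (simp add: two_point_step_def)
  next
    case False
    then obtain m where m: "n = Suc m" using Suc.prems by (cases n) auto
    have "(\<Prod>k<n. two_point_step q (Suc n) i j (Suc k))
        = (\<Prod>k<n. two_point_step q n (i - 1) (j - 1) k)"
      by (intro prod.cong) (use False Suc.prems in \<open>auto simp: two_point_step_def\<close>)
    also have "\<dots> = q ^ (i + j - 5) * qfact q (n - 1)"
    proof -
      have "1 \<le> i - 1" "i - 1 < j - 1" "j - 1 \<le> n + 1" using Suc.prems False by auto
      moreover have "i - 1 + (j - 1) - 3 = i + j - 5" using Suc.prems by linarith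
      ultimately show ?thesis using Suc.IH by metis
    qed
    finally have "(\<Prod>k<Suc n. two_point_step q (Suc n) i j k)
        = q ^ 2 * qint q n * (q ^ (i + j - 5) * qfact q (n - 1))"
      using shift False Suc.prems by (simp add: two_point_step_def del: qint_Suc)
    moreover have "q ^ (i + j - 3) = q ^ 2 * q ^ (i + j - 5)"
    proof -
      have "i + j - 3 = 2 + (i + j - 5)" using False Suc.prems by simp
      then show ?thesis by (simp only: power_add)
    qed
    ultimately show ?thesis using m by (simp add: mult_ac del: qint_Suc)
  qed
qed simp

lemma card_upper_covers_two_point_step:
  fixes A :: "('a::{field,finite}^'b) set"
  assumes A: "vec.subspace A" "vec.dim A = k" and k: "k < CARD('b) - 1"
    and x: "x \<noteq> 0" and y: "y \<notin> vec.span {x}" and ij: "i < j" "j \<le> CARD('b)"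
    and xA: "x \<in> A \<longleftrightarrow> i \<le> k" and yA: "y \<in> A \<longleftrightarrow> j \<le> k"
    and AL: "k < i \<Longrightarrow> A \<inter> vec.span {x, y} = {0}"
  shows "card {W \<in> upper_covers A UNIV. (x \<in> W \<longleftrightarrow> i \<le> Suc k) \<and> (y \<in> W \<longleftrightarrow> j \<le> Suc k)
      \<and> (Suc k < i \<longrightarrow> W \<inter> vec.span {x, y} = {0})}
    = two_point_step CARD('a) (CARD('b) - 1) i j k" (is "card ?C = _")
proof -
  let ?L = "vec.span {x, y}"
  have xL: "x \<in> ?L" and yL: "y \<in> ?L" by (simp_all add: vec.span_base)
  have y0: "y \<noteq> 0" using y vec.span_zero by auto
  have sup: "A \<subseteq> W" if "W \<in> upper_covers A UNIV" for W using that by (simp add: upper_covers_def)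
  consider "Suc k < i" | "Suc k = i" | "i < Suc k" "Suc k < j" | "Suc k = j" | "j < Suc k"
    using ij by linarith
  then show ?thesis
  proof cases
    case 1
    then have "?C = {W \<in> upper_covers A UNIV. W \<inter> ?L = {0}}" using ij xL yL x y0 by auto
    moreover have "CARD('b) - k = (CARD('b) - 1 - 1 - k) + 2" using 1 ij by simp
    ultimately show ?thesis
      using 1 card_upper_covers_meeting_trivially[OF A(1) vec.subspace_span AL] A(2)
        dim_span_pair[OF x y] qint_add_2_diff
      by (simp add: two_point_step_def del: qint_Suc)
  next
    case 2
    then have "?C = {W \<in> upper_covers A UNIV. x \<in> W \<and> y \<notin> W}" using ij by auto
    then show ?thesis
      using 2 card_upper_covers_separating[OF A(1) x y AL] by (simp add: two_point_step_def)
  next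
    case 3
    then have "?C = {W \<in> upper_covers A UNIV. y \<notin> W}" using xA sup by auto
    moreover have "CARD('b) - k = Suc (CARD('b) - 1 - k)" using k by simp
    ultimately show ?thesis
      using 3 yA card_upper_covers_avoiding[OF A(1)] A(2) by (simp add: two_point_step_def)
  next
    case 4
    then have "?C = {W \<in> upper_covers A UNIV. y \<in> W}" using ij xA sup by auto
    then show ?thesis
      using 4 ij yA upper_covers_containing[OF A(1)] by (simp add: two_point_step_def)
  next
    case 5
    then have "?C = upper_covers A UNIV" using ij xA yA sup by auto
    moreover have "CARD('b) - k = CARD('b) - 1 + 1 - k" using k by simp
    ultimately show ?thesis
      using 5 ij card_upper_covers_UNIV[OF A(1)] A(2) by (simp add: two_point_step_def)
  qed
qed

lemma card_flags_of_type_Int_span_singletons: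
  fixes x y :: "'a::{field,finite}^'b"
  assumes x: "x \<noteq> 0" and y: "y \<notin> vec.span {x}" and ij: "1 \<le> i" "i < j" "j \<le> CARD('b)"
  shows "card (flags_of_type i (vec.span {x}) \<inter> flags_of_type j (vec.span {y})
      :: (nat \<Rightarrow> ('a^'b) set) set)
    = CARD('a) ^ (i + j - 3) * qfact CARD('a) (CARD('b) - 2)"
proof -
  let ?n = "CARD('b) - 1" and ?L = "vec.span {x, y}"
  let ?P = "\<lambda>d W. (x \<in> W \<longleftrightarrow> i \<le> d) \<and> (y \<in> W \<longleftrightarrow> j \<le> d) \<and> (d < i \<longrightarrow> W \<inter> ?L = {0})"
  have "card (flags_of_type i (vec.span {x}) \<inter> flags_of_type j (vec.span {y})
      :: (nat \<Rightarrow> ('a^'b) set) set) = card (chains ?P ?n)"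
    unfolding flags_of_type_Int_span_singletons[OF ij]
    by (rule bij_betw_same_card[OF bij_betw_max_flags_chains])
  also have "\<dots> = (\<Prod>k<?n. two_point_step CARD('a) ?n i j k)"
  proof (rule card_chains)
    fix k U assume k: "k < ?n" and U: "U \<in> chains ?P k"
    have "?P k (U k)" if "k = 0"
      using that chains_bottom[OF U] x y vec.span_zero[of "{x}"] vec.span_zero[of "{x, y}"] ij
      by auto
    moreover have "?P k (U k)" if "k \<noteq> 0"
      using that chains_top[of U ?P "k - 1"] U by simp
    ultimately have "?P k (U k)" by blast
    then show "card {W \<in> upper_covers (U k) UNIV. ?P (Suc k) W} = two_point_step CARD('a) ?n i j k"
      using card_upper_covers_two_point_step[of "U k" k x y i j] chains_subspace_dim[OF U, of k]
        k x y ij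
      by simp
  qed
  also have "\<dots> = CARD('a) ^ (i + j - 3) * qfact CARD('a) (CARD('b) - 2)"
    using ij by (simp add: prod_two_point_step numeral_2_eq_2)
  finally show ?thesis .
qed

section \<open>Points of the projective space\<close>

lemma pg_pointsE:
  fixes X :: "('a::{field,finite}^'b) set"
  assumes "X \<in> pg_points"
  obtains x where "x \<noteq> 0" "X = vec.span {x}"
proof -
  have X: "vec.subspace X" "vec.dim X = 1" using assms by (auto simp: pg_points_def)
  obtain B where B: "B \<subseteq> X" "vec.independent B" "X \<subseteq> vec.span B" "card B = 1"
    using vec.basis_exists[of X] X(2) by metis
  then obtain x where "B = {x}" by (auto simp: card_1_singleton_iff)
  moreover have "vec.span B = X" using B vec.span_minimal[OF B(1) X(1)] by auto
  ultimately show ?thesis using that B(2) by auto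
qed

lemma notin_span_singleton_if_neq:
  assumes "y \<noteq> 0" "vec.span {x} \<noteq> vec.span {y}"
  shows "y \<notin> vec.span {x}"
proof
  assume y: "y \<in> vec.span {x}"
  then have "x \<in> vec.span {y}" using assms(1) vec.in_span_insert[of y x "{}"] by simp
  then have "vec.span {x} = vec.span {y}"
    using y vec.span_minimal[of "{x}" "vec.span {y}"] vec.span_minimal[of "{y}" "vec.span {x}"]
    by auto
  then show False using assms(2) by contradiction
qed

lemma two_le_card_if_two_points:
  fixes X Y :: "('a::{field,finite}^'b) set"
  assumes "X \<in> pg_points" "Y \<in> pg_points" "X \<noteq> Y"
  shows "2 \<le> CARD('b)"
proof -
  obtain x y where x: "x \<noteq> 0" "X = vec.span {x}" and y: "y \<noteq> 0" "Y = vec.span {y}"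
    using pg_pointsE assms(1,2) by metis
  then have "vec.dim (vec.span {x, y}) = 2"
    using notin_span_singleton_if_neq assms(3) dim_span_pair by metis
  then show ?thesis
    using vec.dim_subset[of "vec.span {x, y}" UNIV] by (simp add: card_cart_basis)
qed

lemma card_flags_of_type:
  fixes X :: "('a::{field,finite}^'b) set"
  assumes "X \<in> pg_points" "i \<in> {1..CARD('b)}"
  shows "card (flags_of_type i X) = CARD('a) ^ (i - 1) * qfact CARD('a) (CARD('b) - 1)"
  using card_flags_of_type_span_singleton assms by (metis pg_pointsE)

lemma card_flags_of_type_Int_distinct_types:
  fixes X Y :: "('a::{field,finite}^'b) set"
  assumes X: "X \<in> pg_points" and Y: "Y \<in> pg_points" and XY: "X \<noteq> Y"
    and ij: "i \<in> {1..CARD('b)}" "j \<in> {1..CARD('b)}" "i \<noteq> j"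
  shows "card (flags_of_type i X \<inter> flags_of_type j Y)
    = CARD('a) ^ (i + j - 3) * qfact CARD('a) (CARD('b) - 2)"
proof -
  obtain x y where x: "x \<noteq> 0" "X = vec.span {x}" and y: "y \<noteq> 0" "Y = vec.span {y}"
    using pg_pointsE[OF X] pg_pointsE[OF Y] by metis
  have yx: "y \<notin> vec.span {x}" and xy: "x \<notin> vec.span {y}"
    using notin_span_singleton_if_neq x y XY by metis+
  show ?thesis
  proof (cases "i < j")
    case True
    then show ?thesis
      using card_flags_of_type_Int_span_singletons[OF x(1) yx, of i j] x y ij by simp
  next
    case False
    then have "j < i" using ij by simp
    then show ?thesis
      using card_flags_of_type_Int_span_singletons[OF y(1) xy, of j i] x y ij
      by (simp add: Int_commute add.commute)
  qed
qed

lemma sum_card_flags_of_type_Int_other_types: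
  fixes X Y :: "('a::{field,finite}^'b) set"
  assumes X: "X \<in> pg_points" and Y: "Y \<in> pg_points" and XY: "X \<noteq> Y" and i: "i \<in> {1..CARD('b)}"
  shows "(\<Sum>l\<in>{1..CARD('b)} - {i}. real (card (flags_of_type i X \<inter> flags_of_type l Y)))
    = real (qfact CARD('a) (CARD('b) - 2)) * real CARD('a) powi (int i - 2)
      * (real (qint CARD('a) CARD('b)) - real CARD('a) ^ (i - 1))"
proof -
  let ?r = "real CARD('a)" and ?F = "real (qfact CARD('a) (CARD('b) - 2))"
  have "real (card (flags_of_type i X \<inter> flags_of_type l Y))
      = ?F * ?r powi (int i - 2) * ?r ^ (l - 1)"
    if "l \<in> {1..CARD('b)} - {i}" for l
    using card_flags_of_type_Int_distinct_types[OF X Y XY i, of l] that i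
      power_eq_power_int_mult[of ?r l i]
    by simp
  then have "(\<Sum>l\<in>{1..CARD('b)} - {i}. real (card (flags_of_type i X \<inter> flags_of_type l Y)))
      = ?F * ?r powi (int i - 2) * (\<Sum>l\<in>{1..CARD('b)} - {i}. ?r ^ (l - 1))"
    by (simp add: sum_distrib_left)
  also have "(\<Sum>l\<in>{1..CARD('b)} - {i}. ?r ^ (l - 1)) = real (qint CARD('a) CARD('b)) - ?r ^ (i - 1)"
    using sum.remove[of "{1..CARD('b)}" i "\<lambda>l. ?r ^ (l - 1)"] i by (simp add: of_nat_qint)
  finally show ?thesis .
qed

lemma card_flags_of_type_Int_same_type:
  fixes X Y :: "('a::{field,finite}^'b) set"
  assumes X: "X \<in> pg_points" and Y: "Y \<in> pg_points" and XY: "X \<noteq> Y" and i: "i \<in> {1..CARD('b)}"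
  shows "real (card (flags_of_type i X \<inter> flags_of_type i Y))
    = real (qfact CARD('a) (CARD('b) - 2)) * real CARD('a) powi (int i - 2)
      * (real CARD('a) ^ (i - 1) - 1)"
proof -
  let ?N = "CARD('b)" and ?r = "real CARD('a)" and ?F = "real (qfact CARD('a) (CARD('b) - 2))"
  let ?c = "\<lambda>l. real (card (flags_of_type i X \<inter> flags_of_type l Y))"
  have N: "?N - 1 = Suc (?N - 2)" using two_le_card_if_two_points[OF X Y XY] by simp
  have "?r ^ (i - 1) * real (qint CARD('a) (?N - 1)) * ?F = real (card (flags_of_type i X))"
    using card_flags_of_type[OF X i] N by (simp del: qint_Suc)
  also have "\<dots> = (\<Sum>l\<in>{1..?N}. ?c l)"
    using card_eq_sum_card_flags_of_type[of "flags_of_type i X" Y]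
    by (simp add: flags_of_type_def)
  also have "\<dots> = ?c i + ?F * ?r powi (int i - 2) * (real (qint CARD('a) ?N) - ?r ^ (i - 1))"
    using sum.remove[of "{1..?N}" i ?c] i sum_card_flags_of_type_Int_other_types[OF X Y XY i]
    by simp
  finally have "?r ^ (i - 1) * real (qint CARD('a) (?N - 1)) * ?F
      = ?c i + ?F * ?r powi (int i - 2) * (real (qint CARD('a) ?N) - ?r ^ (i - 1))" .
  moreover have "?r ^ (i - 1) = ?r powi (int i - 2) * ?r"
    using power_eq_power_int_mult[of ?r 2 i] i by simp
  moreover have "real (qint CARD('a) ?N) = 1 + ?r * real (qint CARD('a) (?N - 1))"
    using qint_Suc[of "CARD('a)" "?N - 1"] N by (simp del: qint_Suc)
  moreover have "C = F * p * (P - 1)"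
    if "P * g * F = C + F * p * (G - P)" "P = p * r" "G = 1 + r * g" for C F p P g G r :: real
    using that by algebra
  ultimately show ?thesis by blast
qed

theorem mainTheorem5:
  fixes X Y :: "('a::{field,finite} ^ 'b) set" and n i j :: nat
  defines "q \<equiv> CARD('a)"
  assumes n: "CARD('b) = n + 1" and n2: "n \<ge> 2"
    and i: "i \<in> {1..n+1}" and j: "j \<in> {1..n+1}"
    and X: "X \<in> pg_points" and Y: "Y \<in> pg_points"
  shows "real (card (flags_of_type i X \<inter> flags_of_type j Y)) =
    (if X = Y
     then (if i = j then 1 else 0) * real (pg_c q (n - 1)) * real q ^ (i - 1)
     else real (pg_c q (n - 2)) * real q powi (int i - 2)
            * (real q ^ (j - 1) - (if i = j then 1 else 0)))"
proof -
  have q: "q \<ge> 2" unfolding q_def by (rule card_field_ge_2)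
  have "Suc (n - 1) = CARD('b) - 1" "Suc (n - 2) = CARD('b) - 2" using n n2 by auto
  then have c: "pg_c q (n - 1) = qfact q (CARD('b) - 1)" "pg_c q (n - 2) = qfact q (CARD('b) - 2)"
    by (simp_all only: pg_c_eq_qfact[OF q])
  have ij: "i \<in> {1..CARD('b)}" "j \<in> {1..CARD('b)}" using i j n by auto
  consider "X = Y" "i = j" | "X = Y" "i \<noteq> j" | "X \<noteq> Y" "i = j" | "X \<noteq> Y" "i \<noteq> j" by blast
  then show ?thesis
  proof cases
    case 1
    then show ?thesis using card_flags_of_type[OF X ij(1)] c by (simp add: q_def)
  next
    case 2
    then show ?thesis using flags_of_type_disjoint[of i j X] by simp
  next
    case 3
    then show ?thesis using card_flags_of_type_Int_same_type[OF X Y _ ij(1)] c by (simp add: q_def)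
  next
    case 4
    moreover have "real q ^ (i + j - 3) = real q powi (int i - 2) * real q ^ (j - 1)"
      using power_eq_power_int_mult[of "real q" j i] q 4 ij by auto
    ultimately show ?thesis
      using card_flags_of_type_Int_distinct_types[OF X Y _ ij] c by (simp add: q_def)
  qed
qed

end
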